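(* Let $L\in\mathbb{N}$ and let the scalar sequences $\{\overline{\sigma}^{(l)}_*(k)\}_{k\ge 0}$ ($*\in\{f,i,o\}$), $\{\overline{\phi}^{(l)}_c(k)\}_{k\ge 0}$ and $\{\eta^{(l)}(k)\}_{k\ge -1}$ be defined as in the context. Then for every layer $l\in[L]$ each of these sequences is monotonically non-increasing in $k$ and convergent.
   Context: Fix $L\in\mathbb{N}$, dimensions $n_x,n_c$, and $x_{\max}>0$. For each layer $l\in[L]$ let $n^{(l)}=n_x$ if $l=1$ and $n^{(l)}=n_c$ if $l\ge 2$, and let $x^{(l)}_{\max}=x_{\max}$ if $l=1$ and $x^{(l)}_{\max}=1$ if $l\ge 2$. Let $W^{(l)}_*\in\mathbb{R}^{n_c\times n^{(l)}}$, $U^{(l)}_*\in\mathbb{R}^{n_c\times n_c}$, $b^{(l)}_*\in\mathbb{R}^{n_c}$ for $*\in\{f,i,c,o\}$. Let $\sigma(w)=1/(1+e^{-w})$ and $\phi(w)=\tanh w$. For a matrix $A$, $|A|$ is the entrywise absolute value; $\mathbf{1}_n$ is the all-ones vector in $\mathbb{R}^n$; for a vector $v$, $v_+$ is the componentwise positive part $(\max\{v_{(j)},0\})_j$; $\|v\|_\infty=\max_j|v_{(j)}|$. Define, for $\eta\ge 0$ and $*\in\{f,i,o\}$, $G^{(l)}_*(\eta)=\big\|\big(x^{(l)}_{\max}|W^{(l)}_*|\mathbf{1}_{n^{(l)}}+\eta|U^{(l)}_*|\mathbf{1}_{n_c}+b^{(l)}_*\big)_+\big\|_\infty$, and $G^{(l)}_c(\eta)=\big\|x^{(l)}_{\max}|W^{(l)}_c|\mathbf{1}_{n^{(l)}}+\eta|U^{(l)}_c|\mathbf{1}_{n_c}+|b^{(l)}_c|\big\|_\infty$.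 Define recursively, with $\eta^{(l)}(-1)=1$ and for $k\ge 0$: $\overline{\sigma}^{(l)}_*(k)=\sigma(G^{(l)}_*(\eta^{(l)}(k-1)))$ for $*\in\{f,i,o\}$; $\overline{\phi}^{(l)}_c(k)=\phi(G^{(l)}_c(\eta^{(l)}(k-1)))$; $\overline{c}^{(l)}(k)=\dfrac{\overline{\sigma}^{(l)}_i(k)\,\overline{\phi}^{(l)}_c(k)}{1-\overline{\sigma}^{(l)}_f(k)}$; $\eta^{(l)}(k)=\phi(\overline{c}^{(l)}(k))\,\overline{\sigma}^{(l)}_o(k)$. *)

theory Defs
  imports "HOL-Analysis.Analysis"
begin

datatype gate = Gf | Gi | Gc | Go

definition sigmoid :: "real \<Rightarrow> real" where
  "sigmoid w = 1 / (1 + exp (- w))"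

definition n_layer :: "nat \<Rightarrow> nat \<Rightarrow> nat \<Rightarrow> nat" where
  "n_layer nx nc l = (if l = 1 then nx else nc)"

definition xmax_layer :: "real \<Rightarrow> nat \<Rightarrow> real" where
  "xmax_layer xmax l = (if l = 1 then xmax else 1)"

definition norm_inf :: "nat \<Rightarrow> (nat \<Rightarrow> real) \<Rightarrow> real" where
  "norm_inf m v = Max {\<bar>v j\<bar> | j. j < m}"

text \<open>G^{(l)}_*(eta): W, U matrices (row j, column i), b bias vector of the given gate of layer l.\<close>
definition Gfun :: "nat \<Rightarrow> nat \<Rightarrow> real \<Rightarrow> (nat \<Rightarrow> nat \<Rightarrow> real) \<Rightarrow> (nat \<Rightarrow> nat \<Rightarrow> real)
                    \<Rightarrow> (nat \<Rightarrow> real) \<Rightarrow> gate \<Rightarrow> real \<Rightarrow> real" where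
  "Gfun n nc xm W U b g \<eta> =
     (if g = Gc then
        norm_inf nc (\<lambda>j. xm * (\<Sum>i<n. \<bar>W j i\<bar>) + \<eta> * (\<Sum>i<nc. \<bar>U j i\<bar>) + \<bar>b j\<bar>)
      else
        norm_inf nc (\<lambda>j. max (xm * (\<Sum>i<n. \<bar>W j i\<bar>) + \<eta> * (\<Sum>i<nc. \<bar>U j i\<bar>) + b j) 0))"

definition Glayer :: "nat \<Rightarrow> nat \<Rightarrow> real \<Rightarrow> (nat \<Rightarrow> gate \<Rightarrow> nat \<Rightarrow> nat \<Rightarrow> real)
    \<Rightarrow> (nat \<Rightarrow> gate \<Rightarrow> nat \<Rightarrow> nat \<Rightarrow> real) \<Rightarrow> (nat \<Rightarrow> gate \<Rightarrow> nat \<Rightarrow> real)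
    \<Rightarrow> nat \<Rightarrow> gate \<Rightarrow> real \<Rightarrow> real" where
  "Glayer nx nc xmax W U b l g \<eta> =
     Gfun (n_layer nx nc l) nc (xmax_layer xmax l) (W l g) (U l g) (b l g) g \<eta>"

text \<open>Shifted eta sequence: eta_seq ... l k = eta^{(l)}(k - 1), so eta_seq ... l 0 = eta^{(l)}(-1) = 1.\<close>
fun eta_seq :: "nat \<Rightarrow> nat \<Rightarrow> real \<Rightarrow> (nat \<Rightarrow> gate \<Rightarrow> nat \<Rightarrow> nat \<Rightarrow> real)
    \<Rightarrow> (nat \<Rightarrow> gate \<Rightarrow> nat \<Rightarrow> nat \<Rightarrow> real) \<Rightarrow> (nat \<Rightarrow> gate \<Rightarrow> nat \<Rightarrow> real)
    \<Rightarrow> nat \<Rightarrow> nat \<Rightarrow> real" where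
  "eta_seq nx nc xmax W U b l 0 = 1"
| "eta_seq nx nc xmax W U b l (Suc k) =
     (let e = eta_seq nx nc xmax W U b l k;
          G = Glayer nx nc xmax W U b l;
          cbar = sigmoid (G Gi e) * tanh (G Gc e) / (1 - sigmoid (G Gf e))
      in tanh cbar * sigmoid (G Go e))"

definition sigbar where
  "sigbar nx nc xmax W U b l g k =
     sigmoid (Glayer nx nc xmax W U b l g (eta_seq nx nc xmax W U b l k))"

definition phibar where
  "phibar nx nc xmax W U b l k =
     tanh (Glayer nx nc xmax W U b l Gc (eta_seq nx nc xmax W U b l k))"

end

theory Submission
  imports Defs
begin

(* Every gate bound G is nondecreasing in eta >= 0, and sigmoid, tanh and
   cbar = sigma_i phi_c / (1 - sigma_f) are monotone on the relevant nonnegative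
   ranges, so the map F with eta(k) = F(eta(k - 1)) is monotone on [0, oo) and takes
   values in [0, 1]. Hence eta(0) <= 1 = eta(-1), and monotonicity of F propagates
   this first decrease along the whole orbit. The gate sequences are monotone images
   of eta, and all sequences are bounded below, so they converge. *)

lemma decseq_orbit:
  fixes x :: "nat \<Rightarrow> 'a::order"
  assumes step: "\<And>k. x (Suc k) = F (x k)"
    and mono: "mono_on S F" and orbit: "\<And>k. x k \<in> S"
    and start: "x 1 \<le> x 0"
  shows "decseq x"
proof (rule decseq_SucI)
  fix k show "x (Suc k) \<le> x k"
  proof (induction k)
    case 0 then show ?case using start by simp
  next
    case (Suc k)
    have "F (x (Suc k)) \<le> F (x k)" using mono_onD[OF mono orbit orbit Suc.IH] .
    then show ?case by (metis step)
  qed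
qed

lemma decseq_comp_mono_on:
  assumes "decseq x" "range x \<subseteq> S" "mono_on S f"
  shows "decseq (\<lambda>k. f (x k))"
  using assms unfolding decseq_def by (metis mono_onD range_subsetD)

lemma decseq_bounded_below_convergent:
  fixes X :: "nat \<Rightarrow> real"
  assumes "decseq X" "\<And>k. B \<le> X k"
  shows "convergent X"
  using assms by (intro Bseq_monoseq_convergent decseq_bounded decseq_imp_monoseq) auto

lemma sigmoid_pos: "sigmoid x > 0"
  unfolding sigmoid_def by (simp add: add_pos_pos)

lemma sigmoid_less_1: "sigmoid x < 1"
  unfolding sigmoid_def by (simp add: add_pos_pos)

lemma mono_sigmoid: "mono sigmoid"
  unfolding sigmoid_def by (intro monoI divide_left_mono) (auto simp: add_pos_pos)

lemma mono_tanh_real: "mono (tanh :: real \<Rightarrow> real)"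
  by (simp add: mono_def)

lemma norm_inf_altdef: "norm_inf m v = Max ((\<lambda>j. \<bar>v j\<bar>) ` {..<m})"
  unfolding norm_inf_def by (rule arg_cong[where f = Max]) auto

lemma norm_inf_nonneg: "m \<ge> 1 \<Longrightarrow> norm_inf m v \<ge> 0"
  unfolding norm_inf_altdef by (subst Max_ge_iff) (auto simp: Suc_le_eq)

lemma norm_inf_mono:
  assumes "\<And>j. j < m \<Longrightarrow> \<bar>v j\<bar> \<le> \<bar>w j\<bar>"
  shows "norm_inf m v \<le> norm_inf m w"
proof (cases "m = 0")
  case False
  then show ?thesis unfolding norm_inf_altdef
    using assms by (auto intro!: Max.boundedI intro: order_trans[OF assms Max_ge])
qed (simp add: norm_inf_def)

lemma mono_on_Gfun:
  assumes "xm \<ge> 0"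
  shows "mono_on {0..} (Gfun n nc xm W U b g)"
proof (rule mono_onI)
  fix e e' :: real assume "e \<in> {0..}" "e' \<in> {0..}" "e \<le> e'"
  then have "e * (\<Sum>i<nc. \<bar>U j i\<bar>) \<le> e' * (\<Sum>i<nc. \<bar>U j i\<bar>)"
    and "0 \<le> xm * (\<Sum>i<n. \<bar>W j i\<bar>) + e * (\<Sum>i<nc. \<bar>U j i\<bar>)" for j
    using assms by (auto intro!: mult_right_mono sum_nonneg)
  then show "Gfun n nc xm W U b g e \<le> Gfun n nc xm W U b g e'"
    unfolding Gfun_def by (auto intro!: norm_inf_mono) (smt (verit))+
qed

lemma mono_on_Glayer: "xmax \<ge> 0 \<Longrightarrow> mono_on {0..} (Glayer nx nc xmax W U b l g)"
  unfolding Glayer_def[abs_def] by (rule mono_on_Gfun) (simp add: xmax_layer_def)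

lemma Glayer_nonneg: "nc \<ge> 1 \<Longrightarrow> Glayer nx nc xmax W U b l g e \<ge> 0"
  unfolding Glayer_def Gfun_def by (simp add: norm_inf_nonneg)

definition cbar :: "nat \<Rightarrow> nat \<Rightarrow> real \<Rightarrow> (nat \<Rightarrow> gate \<Rightarrow> nat \<Rightarrow> nat \<Rightarrow> real)
    \<Rightarrow> (nat \<Rightarrow> gate \<Rightarrow> nat \<Rightarrow> nat \<Rightarrow> real) \<Rightarrow> (nat \<Rightarrow> gate \<Rightarrow> nat \<Rightarrow> real)
    \<Rightarrow> nat \<Rightarrow> real \<Rightarrow> real" where
  "cbar nx nc xmax W U b l e =
     (let G = Glayer nx nc xmax W U b l
      in sigmoid (G Gi e) * tanh (G Gc e) / (1 - sigmoid (G Gf e)))"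

definition eta_step :: "nat \<Rightarrow> nat \<Rightarrow> real \<Rightarrow> (nat \<Rightarrow> gate \<Rightarrow> nat \<Rightarrow> nat \<Rightarrow> real)
    \<Rightarrow> (nat \<Rightarrow> gate \<Rightarrow> nat \<Rightarrow> nat \<Rightarrow> real) \<Rightarrow> (nat \<Rightarrow> gate \<Rightarrow> nat \<Rightarrow> real)
    \<Rightarrow> nat \<Rightarrow> real \<Rightarrow> real" where
  "eta_step nx nc xmax W U b l e =
     tanh (cbar nx nc xmax W U b l e) * sigmoid (Glayer nx nc xmax W U b l Go e)"

lemma eta_seq_Suc:
  "eta_seq nx nc xmax W U b l (Suc k) = eta_step nx nc xmax W U b l (eta_seq nx nc xmax W U b l k)"
  by (simp add: eta_step_def cbar_def Let_def)

lemma cbar_nonneg: "nc \<ge> 1 \<Longrightarrow> cbar nx nc xmax W U b l e \<ge> 0"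
  unfolding cbar_def Let_def using sigmoid_pos sigmoid_less_1
  by (intro divide_nonneg_pos mult_nonneg_nonneg) (auto simp: Glayer_nonneg less_imp_le)

lemma mono_on_cbar:
  assumes "nc \<ge> 1" "xmax \<ge> 0"
  shows "mono_on {0..} (cbar nx nc xmax W U b l)"
proof (rule mono_onI)
  fix e e' :: real assume e: "e \<in> {0..}" "e' \<in> {0..}" "e \<le> e'"
  let ?G = "Glayer nx nc xmax W U b l"
  have G: "?G g e \<le> ?G g e'" for g using mono_onD[OF mono_on_Glayer[OF assms(2)] e] .
  have "sigmoid (?G Gi e) * tanh (?G Gc e) \<le> sigmoid (?G Gi e') * tanh (?G Gc e')"
    using G[of Gi] G[of Gc] mono_sigmoid sigmoid_pos
    by (intro mult_mono) (auto simp: Glayer_nonneg[OF assms(1)] monoD less_imp_le)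
  moreover have "1 - sigmoid (?G Gf e') \<le> 1 - sigmoid (?G Gf e)"
    using G[of Gf] mono_sigmoid by (simp add: monoD)
  ultimately show "cbar nx nc xmax W U b l e \<le> cbar nx nc xmax W U b l e'"
    unfolding cbar_def Let_def using sigmoid_pos sigmoid_less_1
    by (intro frac_le) (auto simp: Glayer_nonneg[OF assms(1)] less_imp_le)
qed

lemma eta_step_range:
  assumes "nc \<ge> 1"
  shows "eta_step nx nc xmax W U b l e \<in> {0..1}"
proof -
  have "0 \<le> tanh (cbar nx nc xmax W U b l e)" "tanh (cbar nx nc xmax W U b l e) \<le> 1"
    using cbar_nonneg[OF assms] less_imp_le[OF tanh_real_lt_1] by auto
  moreover have "0 \<le> sigmoid s" "sigmoid s \<le> 1" for s
    using sigmoid_pos sigmoid_less_1 less_imp_le by blast+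
  ultimately show ?thesis unfolding eta_step_def by (auto intro: mult_le_one)
qed

lemma mono_on_eta_step:
  assumes "nc \<ge> 1" "xmax \<ge> 0"
  shows "mono_on {0..} (eta_step nx nc xmax W U b l)"
proof (rule mono_onI)
  fix e e' :: real assume e: "e \<in> {0..}" "e' \<in> {0..}" "e \<le> e'"
  have "tanh (cbar nx nc xmax W U b l e) \<le> tanh (cbar nx nc xmax W U b l e')"
    using mono_onD[OF mono_on_cbar[OF assms] e] by simp
  moreover have
    "sigmoid (Glayer nx nc xmax W U b l Go e) \<le> sigmoid (Glayer nx nc xmax W U b l Go e')"
    using mono_onD[OF mono_on_Glayer[OF assms(2)] e] mono_sigmoid by (simp add: monoD)
  ultimately show "eta_step nx nc xmax W U b l e \<le> eta_step nx nc xmax W U b l e'"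
    unfolding eta_step_def using cbar_nonneg[OF assms(1)] sigmoid_pos
    by (intro mult_mono) (auto simp: less_imp_le)
qed

lemma eta_seq_range: "nc \<ge> 1 \<Longrightarrow> eta_seq nx nc xmax W U b l k \<in> {0..1}"
  using eta_step_range by (cases k) (simp_all del: eta_seq.simps(2) add: eta_seq_Suc)

lemma decseq_eta_seq:
  assumes "nc \<ge> 1" "xmax \<ge> 0"
  shows "decseq (eta_seq nx nc xmax W U b l)"
proof (rule decseq_orbit[where x = "eta_seq nx nc xmax W U b l",
      OF eta_seq_Suc mono_on_eta_step[OF assms]])
  show "eta_seq nx nc xmax W U b l k \<in> {0..}" for k
    using eta_seq_range[OF assms(1)] by simp
  show "eta_seq nx nc xmax W U b l 1 \<le> eta_seq nx nc xmax W U b l 0"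
    using eta_seq_range[OF assms(1), of _ _ _ _ _ _ 1] by (simp del: eta_seq.simps(2))
qed

lemma decseq_Glayer_eta_seq:
  assumes "nc \<ge> 1" "xmax \<ge> 0"
  shows "decseq (\<lambda>k. Glayer nx nc xmax W U b l g (eta_seq nx nc xmax W U b l k))"
  using eta_seq_range[OF assms(1)]
  by (intro decseq_comp_mono_on[OF decseq_eta_seq[OF assms] _ mono_on_Glayer[OF assms(2)]]) auto

theorem lemmaB1:
  fixes L nx nc :: nat and xmax :: real
    and W U :: "nat \<Rightarrow> gate \<Rightarrow> nat \<Rightarrow> nat \<Rightarrow> real"
    and b :: "nat \<Rightarrow> gate \<Rightarrow> nat \<Rightarrow> real"
  assumes "nx \<ge> 1" and "nc \<ge> 1" and "xmax > 0"
  shows "\<forall>l \<in> {1..L}.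
           (\<forall>g \<in> {Gf, Gi, Go}.
               decseq (sigbar nx nc xmax W U b l g) \<and> convergent (sigbar nx nc xmax W U b l g))
         \<and> decseq (phibar nx nc xmax W U b l) \<and> convergent (phibar nx nc xmax W U b l)
         \<and> decseq (eta_seq nx nc xmax W U b l) \<and> convergent (eta_seq nx nc xmax W U b l)"
proof -
  have xmax: "xmax \<ge> 0" using assms(3) by simp
  note dec_G = decseq_Glayer_eta_seq[OF assms(2) xmax]
  have "decseq (sigbar nx nc xmax W U b l g)" for l g
    unfolding sigbar_def[abs_def] by (rule decseq_comp_mono_on[OF dec_G subset_UNIV mono_sigmoid])
  moreover have "decseq (phibar nx nc xmax W U b l)" for l
    unfolding phibar_def[abs_def] by (rule decseq_comp_mono_on[OF dec_G subset_UNIV mono_tanh_real])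
  ultimately show ?thesis
    using decseq_eta_seq[OF assms(2) xmax] eta_seq_range[OF assms(2)]
    by (auto intro!: decseq_bounded_below_convergent[where B = 0]
        simp: sigbar_def phibar_def sigmoid_pos less_imp_le Glayer_nonneg[OF assms(2)])
qed

end
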